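(* Let $v\equiv u\equiv 2$ or $5\pmod 6$, let $c<\binom u3$, and let $(u,c)$ satisfy (C1) with associated pair $(\lambda,\varepsilon)$. Suppose $(U,\mathcal F)$ is an NWBTS$(u;c)$ and $(V,\mathcal F')$ is a simple GDD$_\lambda(2,3,v)$ of type $1^{v-u}u^1$ with long group $U\subset V$. Then $(V,\mathcal F\cup\mathcal F')$ is an NWBTS$(v;b)$ where $3b=\lambda\binom v2+\varepsilon$.
   Context: A GDD$_\lambda(2,3,v)$ of type $1^{v-u}u^1$ with long group $U$ on a $v$-set $V\supseteq U$, $|U|=u$, is a family of 3-subsets of $V$ such that no block contains two points of $U$ and every pair of points of $V$ not contained in $U$ lies in exactly $\lambda$ blocks; simple means no repeated blocks. A triple system TS$(v;b)$ is a pair $(V,\mathcal F)$, $V$ a set of $v\ge3$ points, $\mathcal F$ a multiset of $b$ 3-subsets (blocks); simple if no repeated block. $\lambda_{x_1,\dots,x_j}$ is the number of blocks containing $\{x_1,\dots,x_j\}$; $j$-balanced means $|\lambda_{x_1,\dots,x_j}-\lambda_{y_1,\dots,y_j}|\le1$ for all $j$-subsets. Associated pair $(\lambda,\varepsilon)$ of $(v,b)$: $3b=\lambda\binom v2+\varepsilon$, $-v/2<\varepsilon<v/2$. (C1): $v\equiv 2\pmod 3$ and $b\in\{\lfloor \lambda v(v-1)/6\rfloor,\lceil \lambda v(v-1)/6\rceil\}$ with $\lambda\equiv1,2\pmod 3$ if $v\equiv5\pmod6$ and $\lambda\equiv 2,4\pmod 6$ if $v\equiv2\pmod 6$ ($\lambda$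 being that of the associated pair; then $\varepsilon\in\{\pm1,\pm2\}$). Defect graph (when all $\lambda_{x,y}\in\{\lambda-1,\lambda,\lambda+1\}$): graph with edges of pairs with $\lambda_{x,y}=\lambda+1$ (label $+1$) or $\lambda-1$ (label $-1$); isomorphisms preserve labels. $G_{\pm1}$: triangle with two $\pm1$ edges and one $\mp1$ edge; $G_{\pm2}$: 4-cycle with three $\pm1$ edges and one $\mp1$ edge. Under (C1), a TS is nearly 2-balanced if all $\lambda_{x,y}\in\{\lambda-1,\lambda,\lambda+1\}$ and its defect graph is isomorphic to $G_\varepsilon$; an NWBTS$(v;b)$ is a nearly 2-balanced 3-balanced TS$(v;b)$. *)

theory Defs
  imports Complex_Main "HOL-Library.Multiset"
begin

definition lam :: "'a set multiset \<Rightarrow> 'a set \<Rightarrow> int" where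
  "lam F S = int (size (filter_mset (\<lambda>B. S \<subseteq> B) F))"

definition TS :: "'a set \<Rightarrow> 'a set multiset \<Rightarrow> bool" where
  "TS V F \<longleftrightarrow> finite V \<and> card V \<ge> 3 \<and> (\<forall>B\<in>#F. B \<subseteq> V \<and> card B = 3)"

definition simple_ms :: "'a set multiset \<Rightarrow> bool" where
  "simple_ms F \<longleftrightarrow> (\<forall>B. count F B \<le> 1)"

definition j_balanced :: "nat \<Rightarrow> 'a set \<Rightarrow> 'a set multiset \<Rightarrow> bool" where
  "j_balanced j V F \<longleftrightarrow> (\<forall>S T. S \<subseteq> V \<longrightarrow> T \<subseteq> V \<longrightarrow> card S = j \<longrightarrow> card T = j
      \<longrightarrow> \<bar>lam F S - lam F T\<bar> \<le> 1)"

definition assoc_pair :: "nat \<Rightarrow> nat \<Rightarrow> int \<Rightarrow> int \<Rightarrow> bool" where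
  "assoc_pair v b l e \<longleftrightarrow> 3 * int b = l * int (v choose 2) + e \<and>
     - real v / 2 < real_of_int e \<and> real_of_int e < real v / 2"

definition C1 :: "nat \<Rightarrow> nat \<Rightarrow> bool" where
  "C1 v b \<longleftrightarrow> v mod 3 = 2 \<and> (\<exists>l e. assoc_pair v b l e \<and>
     (int b = \<lfloor>real_of_int l * real v * (real v - 1) / 6\<rfloor> \<or>
      int b = \<lceil>real_of_int l * real v * (real v - 1) / 6\<rceil>) \<and>
     (v mod 6 = 5 \<longrightarrow> l mod 3 \<in> {1, 2}) \<and>
     (v mod 6 = 2 \<longrightarrow> l mod 6 \<in> {2, 4}))"

text \<open>Defect graph (pairs with lambda_xy different from l, labelled by lambda_xy - l)
  isomorphic to G_e.\<close>
definition defect_iso :: "'a set \<Rightarrow> 'a set multiset \<Rightarrow> int \<Rightarrow> int \<Rightarrow> bool" where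
  "defect_iso V F l e \<longleftrightarrow>
    (let s = sgn e; D = {P. P \<subseteq> V \<and> card P = 2 \<and> lam F P \<noteq> l} in
     (\<bar>e\<bar> = 1 \<and> (\<exists>x y z. x \<in> V \<and> y \<in> V \<and> z \<in> V \<and> distinct [x, y, z] \<and>
        D = {{x, y}, {y, z}, {x, z}} \<and>
        lam F {x, y} = l + s \<and> lam F {y, z} = l + s \<and> lam F {x, z} = l - s)) \<or>
     (\<bar>e\<bar> = 2 \<and> (\<exists>a b c d. a \<in> V \<and> b \<in> V \<and> c \<in> V \<and> d \<in> V \<and> distinct [a, b, c, d] \<and>
        D = {{a, b}, {b, c}, {c, d}, {d, a}} \<and>
        lam F {a, b} = l + s \<and> lam F {b, c} = l + s \<and> lam F {c, d} = l + s \<and>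
        lam F {d, a} = l - s)))"

definition nearly_2_balanced :: "'a set \<Rightarrow> 'a set multiset \<Rightarrow> int \<Rightarrow> int \<Rightarrow> bool" where
  "nearly_2_balanced V F l e \<longleftrightarrow>
    (\<forall>P. P \<subseteq> V \<longrightarrow> card P = 2 \<longrightarrow> lam F P \<in> {l - 1, l, l + 1}) \<and> defect_iso V F l e"

definition NWBTS :: "'a set \<Rightarrow> 'a set multiset \<Rightarrow> bool" where
  "NWBTS V F \<longleftrightarrow> TS V F \<and> C1 (card V) (size F) \<and>
     (\<exists>l e. assoc_pair (card V) (size F) l e \<and> nearly_2_balanced V F l e) \<and>
     j_balanced 3 V F"

definition simple_GDD_long :: "int \<Rightarrow> 'a set \<Rightarrow> 'a set \<Rightarrow> 'a set multiset \<Rightarrow> bool" where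
  "simple_GDD_long l V U F \<longleftrightarrow> finite V \<and> U \<subseteq> V \<and>
     (\<forall>B\<in>#F. B \<subseteq> V \<and> card B = 3 \<and> \<not> (\<exists>x y. x \<in> U \<and> y \<in> U \<and> x \<noteq> y \<and> x \<in> B \<and> y \<in> B)) \<and>
     (\<forall>x y. x \<in> V \<longrightarrow> y \<in> V \<longrightarrow> x \<noteq> y \<longrightarrow> \<not> {x, y} \<subseteq> U \<longrightarrow> lam F {x, y} = l) \<and>
     simple_ms F"

end

theory Submission
  imports Defs
begin

text \<open>A block of the GDD meets the long group \<open>U\<close> in at most one point, so pairs and
  triples inside \<open>U\<close> are covered by \<open>\<F>\<close> alone, while every other pair is covered exactly
  \<open>\<lambda>\<close> times by \<open>\<F>'\<close> and never by \<open>\<F>\<close>. Hence \<open>\<F> \<union> \<F>'\<close> has the defect graph of \<open>\<F>\<close>, and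
  double counting pairs gives \<open>3|\<F>'| = \<lambda>(C(v,2) - C(u,2))\<close>, so the associated pair
  \<open>(\<lambda>, \<epsilon>)\<close> is inherited; condition (C1) then transfers because it only depends on
  \<open>v mod 6\<close>, \<open>\<lambda>\<close> and \<open>|\<epsilon>| < 3\<close>. For 3-balance: \<open>c < C(u,3)\<close> leaves a triple of \<open>U\<close>
  uncovered, so 3-balance of \<open>\<F>\<close> covers every triple of \<open>U\<close> at most once, and simplicity of
  \<open>\<F>'\<close> does the same for all other triples.\<close>

lemma lam_nonneg: "0 \<le> lam F S"
  by (simp add: lam_def)

lemma lam_union: "lam (F + G) S = lam F S + lam G S"
  by (simp add: lam_def)

lemma lam_eq_0_if_not_subset:
  assumes "\<forall>B\<in>#F. B \<subseteq> U" and "\<not> S \<subseteq> U"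
  shows "lam F S = 0"
  using assms by (auto simp: lam_def)

lemma lam_eq_count_if_card_3:
  assumes "\<forall>B\<in>#F. card B = 3" and "card T = 3"
  shows "lam F T = int (count F T)"
proof -
  have "T \<subseteq> B \<longleftrightarrow> B = T" if "B \<in># F" for B
    using assms that card_subset_eq[of B T] card.infinite[of B] by fastforce
  then have "filter_mset (\<lambda>B. T \<subseteq> B) F = filter_mset (\<lambda>B. B = T) F"
    by (rule filter_mset_cong[OF refl])
  then show ?thesis
    by (simp add: lam_def filter_eq_replicate_mset)
qed

lemma sum_lam_pairs:
  assumes "finite V" and "\<forall>B\<in>#F. B \<subseteq> V \<and> card B = 3"
  shows "(\<Sum>P | P \<subseteq> V \<and> card P = 2. lam F P) = 3 * int (size F)"
  using assms(2)
proof (induction F)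
  case empty
  then show ?case by (simp add: lam_def)
next
  case (add B F)
  have B: "B \<subseteq> V" "card B = 3"
    using add.prems by auto
  have "{P. P \<subseteq> V \<and> card P = 2 \<and> P \<subseteq> B} = {P. P \<subseteq> B \<and> card P = 2}"
    using B by auto
  moreover have "card {P. P \<subseteq> B \<and> card P = 2} = 3"
    using n_subsets[of B 2] B card_ge_0_finite[of B] by (simp add: choose_two)
  ultimately have "(\<Sum>P | P \<subseteq> V \<and> card P = 2. if P \<subseteq> B then 1 else 0 :: int) = 3"
    using assms(1) by (simp add: sum.inter_filter[symmetric])
  moreover have "lam (add_mset B F) P = lam F P + (if P \<subseteq> B then 1 else 0)" for P
    by (simp add: lam_def)
  ultimately show ?case
    using add by (simp add: sum.distrib)
qed

lemma card_set_mset_le_size: "card (set_mset M) \<le> size M"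
  by (induction M) (auto simp: card_insert_if)

lemma exists_triple_not_in_mset:
  assumes "finite U" and "\<forall>B\<in>#F. B \<subseteq> U \<and> card B = 3" and "size F < card U choose 3"
  obtains T where "T \<subseteq> U" "card T = 3" "T \<notin># F"
proof -
  have "card (set_mset F) < card {T. T \<subseteq> U \<and> card T = 3}"
    using card_set_mset_le_size[of F] assms(3) n_subsets[OF assms(1), of 3] by simp
  then have "\<not> {T. T \<subseteq> U \<and> card T = 3} \<subseteq> set_mset F"
    by (meson card_mono finite_set_mset not_le)
  then show ?thesis
    using that by blast
qed

lemma choose_two_int: "2 * int (n choose 2) = int n * (int n - 1)"
proof -
  have "even (n * (n - 1))"
    by (cases "even n") auto
  then have "2 * (n choose 2) = n * (n - 1)"
    by (simp add: choose_two)
  then have "int (2 * (n choose 2)) = int (n * (n - 1))"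
    by (rule arg_cong)
  then show ?thesis
    by (cases "n = 0") simp_all
qed

text \<open>Two associated pairs differ by a multiple of \<open>n choose 2 \<ge> n\<close> in \<open>\<epsilon>\<close>, which is
  impossible within the window \<open>-n/2 < \<epsilon> < n/2\<close>.\<close>
lemma assoc_pair_unique:
  assumes "assoc_pair n b l e" and "assoc_pair n b l' e'" and "3 \<le> n"
  shows "l' = l \<and> e' = e"
proof -
  have window: "\<bar>e' - e\<bar> < int n"
    using assms(1,2) unfolding assoc_pair_def by linarith
  have diff: "(l - l') * int (n choose 2) = e' - e"
    using assms(1,2) unfolding assoc_pair_def by (simp add: algebra_simps)
  have "int n * 2 \<le> int n * (int n - 1)"
    using assms(3) by (intro mult_left_mono) auto
  then have "int n \<le> int (n choose 2)"
    using choose_two_int[of n] by linarith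
  have "l = l'"
  proof (rule ccontr)
    assume "l \<noteq> l'"
    then have "1 \<le> \<bar>l - l'\<bar>"
      by simp
    then have "int (n choose 2) \<le> \<bar>(l - l') * int (n choose 2)\<bar>"
      by (simp add: abs_mult mult_le_cancel_right1)
    then show False
      using window diff \<open>int n \<le> int (n choose 2)\<close> by linarith
  qed
  then show ?thesis
    using diff by simp
qed

lemma assoc_pair_rounding_iff:
  assumes "assoc_pair n b l e"
  shows "(int b = \<lfloor>real_of_int l * real n * (real n - 1) / 6\<rfloor> \<or>
          int b = \<lceil>real_of_int l * real n * (real n - 1) / 6\<rceil>) \<longleftrightarrow> \<bar>e\<bar> < 3"
proof -
  have "6 * int b = l * (2 * int (n choose 2)) + 2 * e"
    using assms unfolding assoc_pair_def by (simp add: algebra_simps)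
  then have "6 * int b = l * int n * (int n - 1) + 2 * e"
    by (simp add: choose_two_int mult.assoc)
  then have "real_of_int (6 * int b) = real_of_int (l * int n * (int n - 1) + 2 * e)"
    by (rule arg_cong)
  then have X: "real_of_int l * real n * (real n - 1) / 6 = real b - real_of_int e / 3"
    by simp
  have "int b = \<lfloor>real b - real_of_int e / 3\<rfloor> \<longleftrightarrow>
        real b \<le> real b - real_of_int e / 3 \<and> real b - real_of_int e / 3 < real b + 1"
    by (simp add: floor_eq_iff eq_commute[of "int b"])
  moreover have "int b = \<lceil>real b - real_of_int e / 3\<rceil> \<longleftrightarrow>
        real b - 1 < real b - real_of_int e / 3 \<and> real b - real_of_int e / 3 \<le> real b"
    by (simp add: ceiling_eq_iff eq_commute[of "int b"])
  ultimately show ?thesis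
    unfolding X by linarith
qed

lemma C1_transfer:
  assumes "C1 u c" and "assoc_pair u c l e" and "assoc_pair v b l e"
    and "3 \<le> u" and "v mod 6 = u mod 6"
  shows "C1 v b"
proof -
  obtain l' e' where ap': "assoc_pair u c l' e'"
    and rounding: "int c = \<lfloor>real_of_int l' * real u * (real u - 1) / 6\<rfloor> \<or>
                   int c = \<lceil>real_of_int l' * real u * (real u - 1) / 6\<rceil>"
    and mod5: "u mod 6 = 5 \<longrightarrow> l' mod 3 \<in> {1, 2}"
    and mod2: "u mod 6 = 2 \<longrightarrow> l' mod 6 \<in> {2, 4}"
    and "u mod 3 = 2"
    using assms(1) unfolding C1_def by blast
  have "l' = l" and "e' = e"
    using assoc_pair_unique[OF assms(2) ap' assms(4)] by auto
  have "\<bar>e\<bar> < 3"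
    using rounding assoc_pair_rounding_iff[OF ap'] \<open>e' = e\<close> by simp
  then have "int b = \<lfloor>real_of_int l * real v * (real v - 1) / 6\<rfloor> \<or>
             int b = \<lceil>real_of_int l * real v * (real v - 1) / 6\<rceil>"
    using assoc_pair_rounding_iff[OF assms(3)] by simp
  moreover have "v mod 3 = 2"
    using \<open>u mod 3 = 2\<close> assms(5) by presburger
  ultimately show ?thesis
    unfolding C1_def using assms(3,5) mod5 mod2 \<open>l' = l\<close> by auto
qed

lemma defect_iso_extend:
  assumes "defect_iso U F l e" and "U \<subseteq> V"
    and same_defects: "{P. P \<subseteq> V \<and> card P = 2 \<and> lam G P \<noteq> l} =
                       {P. P \<subseteq> U \<and> card P = 2 \<and> lam F P \<noteq> l}"
    and inside: "\<And>x y. x \<in> U \<Longrightarrow> y \<in> U \<Longrightarrow> x \<noteq> y \<Longrightarrow> lam G {x, y} = lam F {x, y}"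
  shows "defect_iso V G l e"
  using assms(1) unfolding defect_iso_def Let_def same_defects
  apply (elim disjE exE conjE)
  subgoal for x y z
    apply (rule disjI1)
    apply (rule conjI, assumption)
    apply (rule exI[of _ x], rule exI[of _ y], rule exI[of _ z])
    using assms(2) by (simp add: inside subset_iff)
  subgoal for a b c d
    apply (rule disjI2)
    apply (rule conjI, assumption)
    apply (rule exI[of _ a], rule exI[of _ b], rule exI[of _ c], rule exI[of _ d])
    \<comment> \<open>the distinctness facts only provide \<open>a \<noteq> d\<close>, but the last edge is \<open>{d, a}\<close>\<close>
    using assms(2) inside[of d a, OF _ _ not_sym] by (simp add: inside subset_iff)
  done

lemma nearly_2_balanced_extend:
  assumes nb: "nearly_2_balanced U F l e" and "U \<subseteq> V"
    and inside: "\<And>P. P \<subseteq> U \<Longrightarrow> card P = 2 \<Longrightarrow> lam G P = lam F P"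
    and outside: "\<And>P. P \<subseteq> V \<Longrightarrow> card P = 2 \<Longrightarrow> \<not> P \<subseteq> U \<Longrightarrow> lam G P = l"
  shows "nearly_2_balanced V G l e"
proof -
  have "lam G P \<noteq> l \<longleftrightarrow> P \<subseteq> U \<and> lam F P \<noteq> l" if "P \<subseteq> V" "card P = 2" for P
    using inside outside that by (cases "P \<subseteq> U") auto
  then have same_defects: "{P. P \<subseteq> V \<and> card P = 2 \<and> lam G P \<noteq> l} = {P. P \<subseteq> U \<and> card P = 2 \<and> lam F P \<noteq> l}"
    using \<open>U \<subseteq> V\<close> by auto
  have same_pairs: "lam G {x, y} = lam F {x, y}" if "x \<in> U" "y \<in> U" "x \<noteq> y" for x y
    using inside that by simp
  have "defect_iso V G l e"
    using nb defect_iso_extend[OF _ \<open>U \<subseteq> V\<close> same_defects same_pairs]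
    unfolding nearly_2_balanced_def by blast
  moreover have "lam G P \<in> {l - 1, l, l + 1}" if "P \<subseteq> V" "card P = 2" for P
    using nb inside outside that unfolding nearly_2_balanced_def by (cases "P \<subseteq> U") auto
  ultimately show ?thesis
    unfolding nearly_2_balanced_def by blast
qed

lemma j_balanced_if_lam_le_1:
  assumes "\<And>S. S \<subseteq> V \<Longrightarrow> card S = j \<Longrightarrow> lam F S \<le> 1"
  shows "j_balanced j V F"
  unfolding j_balanced_def
proof (intro allI impI)
  fix S T assume "S \<subseteq> V" "T \<subseteq> V" "card S = j" "card T = j"
  then show "\<bar>lam F S - lam F T\<bar> \<le> 1"
    using assms[of S] assms[of T] lam_nonneg[of F S] lam_nonneg[of F T] by linarith
qed

lemma lam_le_1_if_3_balanced:
  assumes "TS U F" and "j_balanced 3 U F" and "size F < card U choose 3"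
    and "T \<subseteq> U" and "card T = 3"
  shows "lam F T \<le> 1"
proof -
  have blocks: "\<forall>B\<in>#F. B \<subseteq> U \<and> card B = 3" and "finite U"
    using assms(1) unfolding TS_def by auto
  obtain T0 where T0: "T0 \<subseteq> U" "card T0 = 3" "T0 \<notin># F"
    using exists_triple_not_in_mset[OF \<open>finite U\<close> blocks assms(3)] .
  have "lam F T0 = 0"
    using lam_eq_count_if_card_3[of F T0] blocks T0 by (simp add: not_in_iff)
  moreover have "\<bar>lam F T - lam F T0\<bar> \<le> 1"
    using assms(2,4,5) T0 unfolding j_balanced_def by blast
  ultimately show ?thesis
    by simp
qed

lemma lam_le_1_if_simple:
  assumes "simple_ms F" and "\<forall>B\<in>#F. card B = 3" and "card T = 3"
  shows "lam F T \<le> 1"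
  using assms lam_eq_count_if_card_3[of F T] unfolding simple_ms_def by simp

lemma GDD_lam_in_long_group:
  assumes "simple_GDD_long l V U G" and "S \<subseteq> U" and "2 \<le> card S"
  shows "lam G S = 0"
proof -
  obtain x y where xy: "x \<in> S" "y \<in> S" "x \<noteq> y"
    using assms(3) by (auto simp: numeral_2_eq_2 card_le_Suc_iff)
  have "\<not> (\<exists>x y. x \<in> U \<and> y \<in> U \<and> x \<noteq> y \<and> x \<in> B \<and> y \<in> B)" if "B \<in># G" for B
    using assms(1) that unfolding simple_GDD_long_def by simp
  then have "\<not> S \<subseteq> B" if "B \<in># G" for B
    using that xy assms(2) by blast
  then show ?thesis
    by (simp add: lam_def filter_mset_eq_mempty_iff)
qed

lemma GDD_lam_pair:
  assumes "simple_GDD_long l V U G" and "P \<subseteq> V" and "card P = 2" and "\<not> P \<subseteq> U"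
  shows "lam G P = l"
proof -
  obtain x y where "P = {x, y}" "x \<noteq> y"
    using assms(3) card_2_iff by metis
  then show ?thesis
    using assms unfolding simple_GDD_long_def by auto
qed

lemma GDD_size:
  assumes "simple_GDD_long l V U G"
  shows "3 * int (size G) = l * (int (card V choose 2) - int (card U choose 2))"
proof -
  have "finite V" and "U \<subseteq> V" and blocks: "\<forall>B\<in>#G. B \<subseteq> V \<and> card B = 3"
    using assms unfolding simple_GDD_long_def by auto
  define PV where "PV = {P. P \<subseteq> V \<and> card P = 2}"
  define PU where "PU = {P. P \<subseteq> U \<and> card P = 2}"
  have "finite PV" and "PU \<subseteq> PV"
    using \<open>finite V\<close> \<open>U \<subseteq> V\<close> by (auto simp: PV_def PU_def)
  have "3 * int (size G) = (\<Sum>P\<in>PV. lam G P)"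
    using sum_lam_pairs[OF \<open>finite V\<close> blocks] by (simp add: PV_def)
  also have "\<dots> = (\<Sum>P\<in>PU. lam G P) + (\<Sum>P\<in>PV - PU. lam G P)"
    using sum.subset_diff[OF \<open>PU \<subseteq> PV\<close> \<open>finite PV\<close>] by (simp add: add.commute)
  also have "(\<Sum>P\<in>PU. lam G P) = 0"
    using GDD_lam_in_long_group[OF assms] by (simp add: PU_def)
  also have "(\<Sum>P\<in>PV - PU. lam G P) = (\<Sum>P\<in>PV - PU. l)"
    using GDD_lam_pair[OF assms] by (intro sum.cong) (auto simp: PU_def PV_def)
  also have "(\<Sum>P\<in>PV - PU. l) = l * (int (card PV) - int (card PU))"
    using card_Diff_subset[OF finite_subset[OF \<open>PU \<subseteq> PV\<close> \<open>finite PV\<close>] \<open>PU \<subseteq> PV\<close>]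
      card_mono[OF \<open>finite PV\<close> \<open>PU \<subseteq> PV\<close>] by (simp add: of_nat_diff)
  finally show ?thesis
    using n_subsets[OF \<open>finite V\<close>] n_subsets[OF finite_subset[OF \<open>U \<subseteq> V\<close> \<open>finite V\<close>]]
    by (simp add: PV_def PU_def)
qed

lemma lam_union_GDD_pair:
  assumes "simple_GDD_long l V U G" and "\<forall>B\<in>#F. B \<subseteq> U"
    and "P \<subseteq> V" and "card P = 2"
  shows "lam (F + G) P = (if P \<subseteq> U then lam F P else l)"
  using assms GDD_lam_in_long_group[OF assms(1)] GDD_lam_pair[OF assms(1)]
    lam_eq_0_if_not_subset[OF assms(2)] by (simp add: lam_union)

lemma lam_union_GDD_triple_le_1:
  assumes "simple_GDD_long l V U G" and "TS U F" and "j_balanced 3 U F"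
    and "size F < card U choose 3" and "T \<subseteq> V" and "card T = 3"
  shows "lam (F + G) T \<le> 1"
proof (cases "T \<subseteq> U")
  case True
  then show ?thesis
    using GDD_lam_in_long_group[OF assms(1) True] lam_le_1_if_3_balanced[OF assms(2-4) True]
      assms(6) by (simp add: lam_union)
next
  case False
  have "\<forall>B\<in>#F. B \<subseteq> U"
    using assms(2) by (simp add: TS_def)
  moreover have "simple_ms G" and "\<forall>B\<in>#G. card B = 3"
    using assms(1) by (auto simp: simple_GDD_long_def)
  ultimately show ?thesis
    using lam_eq_0_if_not_subset[OF _ False] lam_le_1_if_simple assms(6) by (simp add: lam_union)
qed

theorem lemma3p2:
  fixes U V :: "'a set" and F F' :: "'a set multiset" and c :: nat and l e :: int
  assumes "finite V" and "U \<subset> V"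
    and "card V mod 6 = card U mod 6" and "card U mod 6 \<in> {2, 5}"
    and "c < card U choose 3"
    and "C1 (card U) c" and "assoc_pair (card U) c l e"
    and "NWBTS U F" and "size F = c"
    and "simple_GDD_long l V U F'"
  shows "NWBTS V (F + F') \<and>
         3 * int (size (F + F')) = l * int (card V choose 2) + e"
proof -
  have "U \<subseteq> V"
    using assms(2) by blast
  obtain l' e' where TS_U: "TS U F" and "j_balanced 3 U F"
    and "assoc_pair (card U) c l' e'" and "nearly_2_balanced U F l' e'"
    using assms(8,9) unfolding NWBTS_def by blast
  moreover have "3 \<le> card U"
    using TS_U by (simp add: TS_def)
  ultimately have nb: "nearly_2_balanced U F l e"
    using assoc_pair_unique[OF assms(7)] by blast
  have blocks_F: "\<forall>B\<in>#F. B \<subseteq> U"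
    using TS_U by (simp add: TS_def)
  have size: "3 * int (size (F + F')) = l * int (card V choose 2) + e"
    using GDD_size[OF assms(10)] assms(7,9) unfolding assoc_pair_def by (simp add: algebra_simps)
  moreover have "card U \<le> card V"
    using card_mono[OF assms(1) \<open>U \<subseteq> V\<close>] .
  ultimately have ap: "assoc_pair (card V) (size (F + F')) l e"
    using assms(7) unfolding assoc_pair_def by auto
  have "TS V (F + F')"
    using TS_U assms(1,10) \<open>U \<subseteq> V\<close> \<open>card U \<le> card V\<close>
    unfolding TS_def simple_GDD_long_def by auto
  moreover have "C1 (card V) (size (F + F'))"
    using C1_transfer[OF assms(6,7) ap \<open>3 \<le> card U\<close> assms(3)] .
  moreover have "nearly_2_balanced V (F + F') l e"
    using nearly_2_balanced_extend[OF nb \<open>U \<subseteq> V\<close>] lam_union_GDD_pair[OF assms(10) blocks_F]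
      \<open>U \<subseteq> V\<close> by auto
  moreover have "j_balanced 3 V (F + F')"
    using lam_union_GDD_triple_le_1[OF assms(10) TS_U \<open>j_balanced 3 U F\<close>] assms(5,9)
    by (intro j_balanced_if_lam_le_1) auto
  ultimately show ?thesis
    using ap size unfolding NWBTS_def by blast
qed

end
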